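(* Let $k\ge 2$ and let $\mathcal H$ be a 3-uniform hypergraph on vertex set $V$ with no Berge cycle of length $2k+1$. Let $V=V_1\cup V_2$ be a partition. Let $\mathcal H_4$ be a set of hyperedges of $\mathcal H$ such that each $E\in\mathcal H_4$ has the form $E=\{u,v,w\}$ where, for some $i\in\{1,2\}$, $u,v\in V_i$, $w\in V_{3-i}$, the pair $\{u,v\}$ is contained in no hyperedge of $\mathcal H$ other than $E$, and $\max(\deg_{\mathcal H}(w,u),\deg_{\mathcal H}(w,v))\ge 3$. Let $G_4$ be the graph with edge set $\{E\cap V_i : E\in\mathcal H_4\}$ (i.e. the pairs $\{u,v\}$ above). Then $G_4$ contains no cycle of length $2k$; consequently $|\mathcal H_4|\le \mathrm{ex}(n,C_{2k})$ where $n=|V|$.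
   Context: $\deg_{\mathcal H}(u,v)$ is the number of hyperedges of $\mathcal H$ containing both $u$ and $v$. A Berge cycle of length $m$ is a family of $m$ distinct hyperedges $H_0,\dots,H_{m-1}$ for which there exist distinct vertices $v_0,\dots,v_{m-1}$ with $\{v_i,v_{i+1}\}\subset H_i$ (indices mod $m$). $\mathrm{ex}(n,C_{2k})$ is the maximum number of edges of a simple graph on $n$ vertices with no cycle of length $2k$. *)

theory Defs
  imports Main
begin

definition uniform3_hypergraph :: "'a set \<Rightarrow> 'a set set \<Rightarrow> bool" where
  "uniform3_hypergraph V H \<longleftrightarrow> finite V \<and> (\<forall>E\<in>H. E \<subseteq> V \<and> card E = 3)"

definition codeg :: "'a set set \<Rightarrow> 'a \<Rightarrow> 'a \<Rightarrow> nat" where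
  "codeg H u v = card {E\<in>H. u \<in> E \<and> v \<in> E}"

definition has_berge_cycle :: "'a set set \<Rightarrow> nat \<Rightarrow> bool" where
  "has_berge_cycle H m \<longleftrightarrow> (\<exists>(Es :: nat \<Rightarrow> 'a set) (vs :: nat \<Rightarrow> 'a).
      inj_on Es {..<m} \<and> inj_on vs {..<m} \<and>
      (\<forall>i<m. Es i \<in> H \<and> vs i \<in> Es i \<and> vs ((i + 1) mod m) \<in> Es i))"

definition has_cycle :: "'a set set \<Rightarrow> nat \<Rightarrow> bool" where
  "has_cycle G m \<longleftrightarrow> 3 \<le> m \<and> (\<exists>vs :: nat \<Rightarrow> 'a.
      inj_on vs {..<m} \<and> (\<forall>i<m. {vs i, vs ((i + 1) mod m)} \<in> G))"

definition simple_graphs_on :: "nat \<Rightarrow> nat set set set" where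
  "simple_graphs_on n = {G. \<forall>e\<in>G. e \<subseteq> {..<n} \<and> card e = 2}"

definition ex_cycle :: "nat \<Rightarrow> nat \<Rightarrow> nat" where
  "ex_cycle n m = Max (card ` {G \<in> simple_graphs_on n. \<not> has_cycle G m})"

end

theory Submission
  imports Defs
begin

text \<open>Suppose the trace graph G_4 has a cycle v_0 \<dots> v_{m-1}. Every edge of G_4 lies inside
  one part, so the whole cycle lies in one part P, and each edge v_i v_{i+1} is the private pair
  of a hyperedge {v_i, v_{i+1}, w_i} \<in> H_4 with w_i \<notin> P. These m hyperedges are distinct and
  form a Berge cycle. Now w_0 has codegree at least 3 with v_0 or with v_1, whereas only two
  hyperedges of the cycle contain that vertex; a third hyperedge through it and w_0 lets the
  cycle detour through w_0, giving a Berge cycle of length m + 1 = 2k + 1.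
  The bound on |H_4| holds because every hyperedge of H_4 is determined by its private pair,
  an edge of G_4.\<close>

lemma cycle_vertices_in_part:
  fixes vs :: "nat \<Rightarrow> 'a" and i :: nat
  assumes "\<forall>i<m. {vs i, vs ((i + 1) mod m)} \<in> G" and "\<forall>e\<in>G. e \<subseteq> P \<or> e \<inter> P = {}"
    and "vs 0 \<in> P"
  shows "i < m \<Longrightarrow> vs i \<in> P"
proof (induction i)
  case (Suc i)
  then have "vs i \<in> P" "{vs i, vs (Suc i)} \<in> G" using assms(1)[rule_format, of i] by simp_all
  moreover from assms(2) this(2) have "{vs i, vs (Suc i)} \<subseteq> P \<or> {vs i, vs (Suc i)} \<inter> P = {}"
    by (rule bspec)
  ultimately show ?case by blast
qed (use assms(3) in simp)

lemma has_cycle_image: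
  assumes f: "inj_on f (\<Union>G)" and "has_cycle ((`) f ` G) m"
  shows "has_cycle G m"
proof -
  obtain vs where "3 \<le> m" and vs: "inj_on vs {..<m}"
    and cyc: "\<forall>i<m. {vs i, vs ((i + 1) mod m)} \<in> (`) f ` G"
    using assms(2) unfolding has_cycle_def by blast
  define g where "g = inv_into (\<Union>G) f"
  have edge: "{g (vs i), g (vs ((i + 1) mod m))} \<in> G \<and> vs i \<in> f ` \<Union>G" if i: "i < m" for i
  proof -
    obtain e where e: "e \<in> G" "{vs i, vs ((i + 1) mod m)} = f ` e" using cyc i by blast
    have "g ` f ` e = e" unfolding g_def using inv_into_image_cancel[OF f] e(1) by blast
    then have "{g (vs i), g (vs ((i + 1) mod m))} = e" using e(2) by (metis image_empty image_insert)
    then show ?thesis using e by blast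
  qed
  have "inj_on g (vs ` {..<m})"
    unfolding g_def by (rule inj_on_inv_into) (use edge in blast)
  then have "inj_on (g \<circ> vs) {..<m}" using vs by (rule comp_inj_on[rotated])
  then show ?thesis unfolding has_cycle_def using \<open>3 \<le> m\<close> edge by auto
qed

lemma card_le_ex_cycle:
  assumes "finite V" and G: "\<forall>e\<in>G. e \<subseteq> V \<and> card e = 2" and "\<not> has_cycle G m"
  shows "card G \<le> ex_cycle (card V) m"
proof -
  obtain f where f: "bij_betw f V {..<card V}"
    using ex_bij_betw_finite_nat[OF \<open>finite V\<close>] atLeast0LessThan by metis
  then have "inj_on f V" "f ` V = {..<card V}" unfolding bij_betw_def by auto
  moreover have "\<Union>G \<subseteq> V" using G by blast
  ultimately have inj: "inj_on f (\<Union>G)" by (blast intro: inj_on_subset)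
  define G' where "G' = (`) f ` G"
  have "card G' = card G"
    unfolding G'_def using inj by (intro card_image inj_on_image) (auto intro: inj_on_subset)
  moreover have "G' \<in> simple_graphs_on (card V)"
  proof -
    have "f ` e \<subseteq> {..<card V} \<and> card (f ` e) = 2" if "e \<in> G" for e
    proof -
      have "card (f ` e) = card e" using that inj_on_subset[OF inj] card_image by (metis Union_upper)
      then show ?thesis using G that \<open>f ` V = {..<card V}\<close> by auto
    qed
    then show ?thesis unfolding G'_def simple_graphs_on_def by blast
  qed
  moreover have "\<not> has_cycle G' m" using has_cycle_image[OF inj] assms(3) unfolding G'_def by blast
  moreover have "finite {G \<in> simple_graphs_on (card V). \<not> has_cycle G m}"
    by (rule finite_subset[of _ "Pow (Pow {..<card V})"]) (auto simp: simple_graphs_on_def)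
  ultimately show ?thesis unfolding ex_cycle_def by (metis (mono_tags) Max_ge finite_imageI imageI mem_Collect_eq)
qed

definition berge_cycle :: "'a set set \<Rightarrow> nat \<Rightarrow> (nat \<Rightarrow> 'a set) \<Rightarrow> (nat \<Rightarrow> 'a) \<Rightarrow> bool" where
  "berge_cycle H m Es vs \<longleftrightarrow> inj_on Es {..<m} \<and> inj_on vs {..<m} \<and>
     (\<forall>i<m. Es i \<in> H \<and> vs i \<in> Es i \<and> vs ((i + 1) mod m) \<in> Es i)"

lemma has_berge_cycleI: "berge_cycle H m Es vs \<Longrightarrow> has_berge_cycle H m"
  unfolding berge_cycle_def has_berge_cycle_def by blast

definition splice_pair :: "'a \<Rightarrow> 'a \<Rightarrow> (nat \<Rightarrow> 'a) \<Rightarrow> nat \<Rightarrow> 'a" where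
  "splice_pair a b f j = (if j = 0 then a else if j = 1 then b else f (j - 1))"

lemma inj_on_splice_pair:
  assumes f: "inj_on f {1..<m}" and "a \<noteq> b" "a \<notin> f ` {1..<m}" "b \<notin> f ` {1..<m}"
  shows "inj_on (splice_pair a b f) {..<Suc m}"
proof (rule inj_onI)
  fix i j assume "i \<in> {..<Suc m}" "j \<in> {..<Suc m}" and eq: "splice_pair a b f i = splice_pair a b f j"
  then have i: "i - 1 \<in> {1..<m}" if "2 \<le> i" using that by auto
  from \<open>j \<in> {..<Suc m}\<close> have j: "j - 1 \<in> {1..<m}" if "2 \<le> j" using that by auto
  consider "i \<le> 1" "j \<le> 1" | "2 \<le> i" "j \<le> 1" | "i \<le> 1" "2 \<le> j" | "2 \<le> i" "2 \<le> j"
    by linarith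
  then show "i = j"
  proof cases
    case 4
    with eq have "f (i - 1) = f (j - 1)" by (simp add: splice_pair_def)
    with 4 show ?thesis using inj_onD[OF f _ i j] by fastforce
  qed (use eq assms i j in \<open>auto simp: splice_pair_def split: if_splits\<close>)
qed

lemma berge_cycle_splice_pair:
  assumes cyc: "berge_cycle H m Es vs" and "2 \<le> m" and w: "w \<notin> vs ` {..<m}"
    and "A \<in> H" "B \<in> H" "A \<noteq> B" "A \<notin> Es ` {1..<m}" "B \<notin> Es ` {1..<m}"
    and "vs 0 \<in> A" "w \<in> A" "w \<in> B" "vs 1 \<in> B"
  shows "berge_cycle H (Suc m) (splice_pair A B Es) (splice_pair (vs 0) w vs)"
proof -
  have inj: "inj_on Es {..<m}" "inj_on vs {..<m}"
    and edge: "\<And>i. i < m \<Longrightarrow> Es i \<in> H \<and> vs i \<in> Es i \<and> vs ((i + 1) mod m) \<in> Es i"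
    using cyc unfolding berge_cycle_def by auto
  have "inj_on Es {1..<m}" "inj_on vs {1..<m}" using inj by (auto intro: inj_on_subset)
  then have "inj_on (splice_pair A B Es) {..<Suc m}" using assms by (intro inj_on_splice_pair) simp_all
  moreover have "inj_on (splice_pair (vs 0) w vs) {..<Suc m}"
  proof (rule inj_on_splice_pair)
    show "inj_on vs {1..<m}" by fact
    show "vs 0 \<noteq> w" "w \<notin> vs ` {1..<m}" using w \<open>2 \<le> m\<close> by auto
    show "vs 0 \<notin> vs ` {1..<m}" using inj(2) \<open>2 \<le> m\<close> by (fastforce simp: inj_on_def)
  qed
  moreover have "splice_pair A B Es i \<in> H \<and> splice_pair (vs 0) w vs i \<in> splice_pair A B Es i \<and>
      splice_pair (vs 0) w vs ((i + 1) mod Suc m) \<in> splice_pair A B Es i" if i: "i < Suc m" for i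
  proof -
    consider "i = 0" | "i = 1" | "2 \<le> i" "i < m" | "i = m" using i by linarith
    then show ?thesis
    proof cases
      case 3
      then show ?thesis using edge[of "i - 1"] by (auto simp: splice_pair_def)
    next
      case 4
      then show ?thesis using edge[of "m - 1"] \<open>2 \<le> m\<close> by (auto simp: splice_pair_def)
    qed (use assms in \<open>auto simp: splice_pair_def\<close>)
  qed
  ultimately show ?thesis unfolding berge_cycle_def by blast
qed

lemma card_ge_3_obtain_other:
  assumes "3 \<le> card S"
  obtains x where "x \<in> S" "x \<noteq> a" "x \<noteq> b"
proof -
  have "\<not> S \<subseteq> {a, b}"
  proof
    assume "S \<subseteq> {a, b}"
    then have "card S \<le> card {a, b}" by (intro card_mono) auto
    also have "\<dots> \<le> 2" by (simp add: card_insert_if)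
    finally show False using assms by simp
  qed
  then show thesis using that by blast
qed

context
  fixes H :: "'a set set" and m :: nat and vs w :: "nat \<Rightarrow> 'a" and E :: "nat \<Rightarrow> 'a set"
  assumes m: "3 \<le> m" and vs: "inj_on vs {..<m}"
    and EH: "\<And>i. i < m \<Longrightarrow> E i \<in> H"
    and E: "\<And>i. i < m \<Longrightarrow> E i = {vs i, vs ((i + 1) mod m), w i}"
    and w: "\<And>i. i < m \<Longrightarrow> w i \<notin> vs ` {..<m}"
begin

lemma triangle_cycle_vertex_mem:
  assumes "i < m" "j < m" "vs i \<in> E j"
  shows "j = i \<or> (j + 1) mod m = i"
proof -
  have "vs i \<noteq> w j" using w[OF \<open>j < m\<close>] \<open>i < m\<close> by (metis lessThan_iff rev_image_eqI)
  then have "vs i = vs j \<or> vs i = vs ((j + 1) mod m)" using E[OF \<open>j < m\<close>] \<open>vs i \<in> E j\<close> by blast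
  then show ?thesis using inj_onD[OF vs] assms m by auto
qed

lemma inj_on_triangle_cycle: "inj_on E {..<m}"
proof (rule inj_onI, rule ccontr)
  fix i j assume ij: "i \<in> {..<m}" "j \<in> {..<m}" "E i = E j" "i \<noteq> j"
  have "vs i \<in> E j" "vs ((i + 1) mod m) \<in> E j" using E[of i] ij by auto
  moreover have "(i + 1) mod m \<noteq> i" using ij m by (simp add: mod_Suc)
  ultimately have "(j + 1) mod m = i" "(i + 1) mod m = j"
    using triangle_cycle_vertex_mem[of i j] triangle_cycle_vertex_mem[of "(i + 1) mod m" j] ij by auto
  then show False using ij m by (simp add: mod_Suc split: if_splits)
qed

lemma has_berge_cycle_Suc_from_triangles:
  assumes codeg: "3 \<le> codeg H (w 0) (vs 0) \<or> 3 \<le> codeg H (w 0) (vs 1)"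
  shows "has_berge_cycle H (Suc m)"
proof -
  have cyc: "berge_cycle H m E vs"
    unfolding berge_cycle_def using inj_on_triangle_cycle vs EH E by auto
  have E0: "vs 0 \<in> E 0" "w 0 \<in> E 0" "vs 1 \<in> E 0" using E[of 0] m by auto
  have E0_new: "E 0 \<notin> E ` {1..<m}"
    using inj_on_image_mem_iff[OF inj_on_triangle_cycle, of 0 "{1..<m}"] m by fastforce
  \<comment> \<open>Only E 0 and E (m - 1) contain vs 0, and only E 0 and E 1 contain vs 1.\<close>
  from codeg show ?thesis
  proof
    assume "3 \<le> codeg H (w 0) (vs 0)"
    then obtain F where F: "F \<in> H" "w 0 \<in> F" "vs 0 \<in> F" "F \<noteq> E 0" "F \<noteq> E (m - 1)"
      unfolding codeg_def by (rule card_ge_3_obtain_other) blast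
    have "F \<notin> E ` {..<m}"
    proof
      assume "F \<in> E ` {..<m}"
      then obtain j where "j < m" "F = E j" by blast
      then have "j = 0 \<or> (j + 1) mod m = 0" using triangle_cycle_vertex_mem[of 0 j] F(3) m by simp
      then have "j = 0 \<or> j = m - 1" using \<open>j < m\<close> by (auto simp: mod_Suc split: if_splits)
      then show False using F \<open>F = E j\<close> by blast
    qed
    then have "berge_cycle H (Suc m) (splice_pair F (E 0) E) (splice_pair (vs 0) (w 0) vs)"
      using EH[of 0] E0 E0_new F w[of 0] m by (intro berge_cycle_splice_pair[OF cyc]) auto
    then show ?thesis by (rule has_berge_cycleI)
  next
    assume "3 \<le> codeg H (w 0) (vs 1)"
    then obtain F where F: "F \<in> H" "w 0 \<in> F" "vs 1 \<in> F" "F \<noteq> E 0" "F \<noteq> E 1"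
      unfolding codeg_def by (rule card_ge_3_obtain_other) blast
    have "F \<notin> E ` {..<m}"
    proof
      assume "F \<in> E ` {..<m}"
      then obtain j where "j < m" "F = E j" by blast
      then have "j = 1 \<or> (j + 1) mod m = 1" using triangle_cycle_vertex_mem[of 1 j] F(3) m by simp
      then have "j = 0 \<or> j = 1" using \<open>j < m\<close> m by (auto simp: mod_Suc split: if_splits)
      then show False using F \<open>F = E j\<close> by blast
    qed
    then have "berge_cycle H (Suc m) (splice_pair (E 0) F E) (splice_pair (vs 0) (w 0) vs)"
      using EH[of 0] E0 E0_new F w[of 0] m by (intro berge_cycle_splice_pair[OF cyc]) auto
    then show ?thesis by (rule has_berge_cycleI)
  qed
qed

end

definition H4_edge :: "'a set set \<Rightarrow> 'a set \<Rightarrow> 'a set \<Rightarrow> 'a set \<Rightarrow> bool" where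
  "H4_edge H V1 V2 E \<longleftrightarrow> (\<exists>u v w. E = {u, v, w} \<and>
     ((u \<in> V1 \<and> v \<in> V1 \<and> w \<in> V2) \<or> (u \<in> V2 \<and> v \<in> V2 \<and> w \<in> V1)) \<and>
     {E'\<in>H. u \<in> E' \<and> v \<in> E'} = {E} \<and>
     max (codeg H w u) (codeg H w v) \<ge> 3)"

definition trace_graph :: "'a set set \<Rightarrow> 'a set \<Rightarrow> 'a set \<Rightarrow> 'a set set" where
  "trace_graph H4 V1 V2 = {e. \<exists>E\<in>H4. (e = E \<inter> V1 \<or> e = E \<inter> V2) \<and> card e = 2}"

lemma trace_graph_edge_triangle:
  assumes "V1 \<inter> V2 = {}" "\<forall>E\<in>H4. H4_edge H V1 V2 E"
    and "{x, y} \<in> trace_graph H4 V1 V2" "P = V1 \<or> P = V2" "x \<in> P"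
  obtains z where "{x, y, z} \<in> H4" "z \<notin> P" "3 \<le> max (codeg H z x) (codeg H z y)"
proof -
  obtain E Q where E: "E \<in> H4" "{x, y} = E \<inter> Q" "Q = V1 \<or> Q = V2" "card {x, y} = 2"
    using assms(3) unfolding trace_graph_def by blast
  then have "x \<in> Q" by blast
  with E(3) assms(1,4,5) have "Q = P" by auto
  from E(1) assms(2) have "H4_edge H V1 V2 E" by blast
  then obtain u v w where uvw: "E = {u, v, w}" "(u \<in> V1 \<and> v \<in> V1 \<and> w \<in> V2) \<or> (u \<in> V2 \<and> v \<in> V2 \<and> w \<in> V1)"
    "max (codeg H w u) (codeg H w v) \<ge> 3"
    unfolding H4_edge_def by blast
  have "u \<in> P \<and> v \<in> P \<and> w \<notin> P \<or> u \<notin> P \<and> v \<notin> P \<and> w \<in> P"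
    using uvw(2) assms(1,4) by auto
  moreover have "\<not> (u \<notin> P \<and> v \<notin> P \<and> w \<in> P)"
  proof
    assume "u \<notin> P \<and> v \<notin> P \<and> w \<in> P"
    then have "E \<inter> P = {w}" using uvw(1) by auto
    then show False using E(2,4) \<open>Q = P\<close> by simp
  qed
  ultimately have "u \<in> P \<and> v \<in> P \<and> w \<notin> P" by blast
  then have "{x, y} = {u, v}" using E(2) uvw(1) \<open>Q = P\<close> by auto
  then have "E = {x, y, w} \<and> 3 \<le> max (codeg H w x) (codeg H w y)"
    using uvw(1,3) by (auto simp: doubleton_eq_iff insert_commute max.commute)
  then show thesis using that E(1) \<open>u \<in> P \<and> v \<in> P \<and> w \<notin> P\<close> by blast
qed

lemma trace_graph_no_cycle:
  assumes "3 \<le> m" "V1 \<inter> V2 = {}" "H4 \<subseteq> H" "\<forall>E\<in>H4. H4_edge H V1 V2 E"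
    and "\<not> has_berge_cycle H (Suc m)"
  shows "\<not> has_cycle (trace_graph H4 V1 V2) m"
proof
  assume "has_cycle (trace_graph H4 V1 V2) m"
  then obtain vs where vs: "inj_on vs {..<m}"
    and cyc: "\<forall>i<m. {vs i, vs ((i + 1) mod m)} \<in> trace_graph H4 V1 V2"
    unfolding has_cycle_def by (elim conjE exE)
  have "{vs 0, vs ((0 + 1) mod m)} \<in> trace_graph H4 V1 V2" using cyc[rule_format, of 0] \<open>3 \<le> m\<close> by simp
  then have "vs 0 \<in> V1 \<or> vs 0 \<in> V2" unfolding trace_graph_def by blast
  then obtain P where P: "P = V1 \<or> P = V2" "vs 0 \<in> P" by blast
  have "\<forall>e\<in>trace_graph H4 V1 V2. e \<subseteq> P \<or> e \<inter> P = {}"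
    using P(1) \<open>V1 \<inter> V2 = {}\<close> unfolding trace_graph_def by auto
  then have inP: "vs i \<in> P" if "i < m" for i
    using cycle_vertices_in_part[OF cyc _ P(2) that] by blast
  have "\<exists>z. {vs i, vs ((i + 1) mod m), z} \<in> H4 \<and> z \<notin> P \<and>
      3 \<le> max (codeg H z (vs i)) (codeg H z (vs ((i + 1) mod m)))" if "i < m" for i
    using trace_graph_edge_triangle[OF assms(2,4) cyc[rule_format, OF that] P(1) inP[OF that]] by metis
  then obtain w where w: "\<And>i. i < m \<Longrightarrow> {vs i, vs ((i + 1) mod m), w i} \<in> H4 \<and> w i \<notin> P \<and>
      3 \<le> max (codeg H (w i) (vs i)) (codeg H (w i) (vs ((i + 1) mod m)))"
    by metis
  have "has_berge_cycle H (Suc m)"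
  proof (rule has_berge_cycle_Suc_from_triangles[OF \<open>3 \<le> m\<close> vs, where E = "\<lambda>i. {vs i, vs ((i + 1) mod m), w i}"])
    show "{vs i, vs ((i + 1) mod m), w i} \<in> H" if "i < m" for i using w[OF that] assms(3) by blast
    show "w i \<notin> vs ` {..<m}" if "i < m" for i using w[OF that] inP by auto
    show "3 \<le> codeg H (w 0) (vs 0) \<or> 3 \<le> codeg H (w 0) (vs 1)"
      using w[of 0] \<open>3 \<le> m\<close> by (simp add: le_max_iff_disj)
  qed simp_all
  with assms(5) show False by contradiction
qed

lemma H4_edge_private_pair:
  assumes "V1 \<inter> V2 = {}" "H4_edge H V1 V2 E" "card E = 3"
  obtains e where "e = E \<inter> V1 \<or> e = E \<inter> V2" "card e = 2" "{E'\<in>H. e \<subseteq> E'} = {E}"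
proof -
  obtain u v w where uvw: "E = {u, v, w}" "(u \<in> V1 \<and> v \<in> V1 \<and> w \<in> V2) \<or> (u \<in> V2 \<and> v \<in> V2 \<and> w \<in> V1)"
    "{E'\<in>H. u \<in> E' \<and> v \<in> E'} = {E}"
    using assms(2) unfolding H4_edge_def by blast
  have "u \<noteq> v" using assms(3) uvw(1) by (auto simp: card_insert_if split: if_splits)
  then have "card {u, v} = 2" by simp
  moreover have "{u, v} = E \<inter> V1 \<or> {u, v} = E \<inter> V2" using uvw(1,2) assms(1) by auto
  moreover have "{E'\<in>H. {u, v} \<subseteq> E'} = {E}" using uvw(3) by simp
  ultimately show thesis using that by metis
qed

lemma card_le_card_trace_graph:
  assumes "V1 \<inter> V2 = {}" "H4 \<subseteq> H" "\<forall>E\<in>H4. H4_edge H V1 V2 E \<and> card E = 3"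
    and "finite (trace_graph H4 V1 V2)"
  shows "card H4 \<le> card (trace_graph H4 V1 V2)"
proof -
  have "\<exists>e\<in>trace_graph H4 V1 V2. e \<subseteq> E \<and> {E'\<in>H. e \<subseteq> E'} = {E}" if E: "E \<in> H4" for E
  proof -
    have "H4_edge H V1 V2 E" "card E = 3" using assms(3) E by auto
    then obtain e where e: "e = E \<inter> V1 \<or> e = E \<inter> V2" "card e = 2" "{E'\<in>H. e \<subseteq> E'} = {E}"
      by (rule H4_edge_private_pair[OF assms(1)])
    then have "e \<in> trace_graph H4 V1 V2"
      unfolding trace_graph_def mem_Collect_eq using E by (intro bexI[of _ E] conjI)
    moreover have "e \<subseteq> E" using e(1) by auto
    ultimately show ?thesis using e(3) by blast
  qed
  then obtain p where p: "\<And>E. E \<in> H4 \<Longrightarrow> p E \<in> trace_graph H4 V1 V2 \<and> p E \<subseteq> E \<and> {E'\<in>H. p E \<subseteq> E'} = {E}"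
    by metis
  have "inj_on p H4"
  proof (rule inj_onI)
    fix E E' assume "E \<in> H4" "E' \<in> H4" "p E = p E'"
    then have "E' \<in> H" "p E \<subseteq> E'" using p[of E'] assms(2) by auto
    then show "E = E'" using p[OF \<open>E \<in> H4\<close>] by blast
  qed
  then show ?thesis using p assms(4) by (intro card_inj_on_le) auto
qed

theorem mainTheorem8:
  fixes V V1 V2 :: "'a set" and H H4 :: "'a set set" and k :: nat
  assumes "2 \<le> k"
    and "uniform3_hypergraph V H"
    and "\<not> has_berge_cycle H (2 * k + 1)"
    and "V = V1 \<union> V2" and "V1 \<inter> V2 = {}"
    and "H4 \<subseteq> H"
    and "\<forall>E\<in>H4. \<exists>u v w. E = {u, v, w} \<and>
           ((u \<in> V1 \<and> v \<in> V1 \<and> w \<in> V2) \<or> (u \<in> V2 \<and> v \<in> V2 \<and> w \<in> V1)) \<and>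
           {E'\<in>H. u \<in> E' \<and> v \<in> E'} = {E} \<and>
           max (codeg H w u) (codeg H w v) \<ge> 3"
  shows "\<not> has_cycle {e. \<exists>E\<in>H4. (e = E \<inter> V1 \<or> e = E \<inter> V2) \<and> card e = 2} (2 * k)
         \<and> card H4 \<le> ex_cycle (card V) (2 * k)"
proof -
  let ?G = "trace_graph H4 V1 V2"
  have H4: "\<forall>E\<in>H4. H4_edge H V1 V2 E" unfolding H4_edge_def by (fact assms(7))
  have uniform: "finite V" "\<forall>E\<in>H. E \<subseteq> V \<and> card E = 3"
    using assms(2) unfolding uniform3_hypergraph_def by auto
  have no_cycle: "\<not> has_cycle ?G (2 * k)"
    using trace_graph_no_cycle[of "2 * k"] assms(1,3,5,6) H4 by simp
  have edges: "\<forall>e\<in>?G. e \<subseteq> V \<and> card e = 2"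
    using uniform(2) assms(6) unfolding trace_graph_def by blast
  then have "finite ?G"
    using uniform(1) by (meson Pow_iff finite_Pow_iff finite_subset subsetI)
  then have "card H4 \<le> card ?G"
    using card_le_card_trace_graph[OF assms(5,6)] H4 uniform(2) assms(6) by blast
  also have "\<dots> \<le> ex_cycle (card V) (2 * k)"
    using card_le_ex_cycle[OF uniform(1) edges no_cycle] .
  finally show ?thesis using no_cycle unfolding trace_graph_def by blast
qed

end
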